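(* Assume the setup and the monomial order in the context. Then $R$ is a Gröbner basis of $I$ with respect to $\le$, i.e. the monoid ideal $\mathrm{Tip}(I)$ of $X^*$ is generated by $\{\mathrm{tip}(g):g\in R\}$.
   Context: Let $k$ be a field and $n\ge 2$ an integer; write $[n]=\{1,\dots,n\}$ and $r(i)=n+1-i$. Let $X=\{u_{j,i},u^*_{j,i}:(j,i)\in[n]^2\}$ be a set of $2n^2$ distinct symbols and let $*$ be the involution of $X$ exchanging $u_{j,i}$ and $u^*_{j,i}$. Let $k\langle X\rangle$ be the free unital $k$-algebra on $X$, with $k$-basis the free monoid $X^*$ of monomials. For an $n\times n$ matrix $v=(v_{j,i})$ with entries in $X$ define $n\times n$ matrices $v^t,v^\star,v^\dagger$ with entries in $X$ by $v^t_{j,i}=v_{i,j}$, $v^\star_{j,i}=(v_{r(j),r(i)})^*$, $v^\dagger_{j,i}=(v_{r(i),r(j)})^*$. Let $u=(u_{j,i})$ and $M=\{u,u^t,u^\star,u^\dagger\}$. Let $I$ be the two-sided ideal generated by $R=\{\sum_{s=1}^n v_{j,r(s)}v^\dagger_{s,r(i)}-\delta_{j,i}1: v\in M,(j,i)\in[n]^2\}$. Monomial order: let $\le$ be the total order on $X$ with $u^*_{t,s}<u_{j,i}$ for all indices, $u_{t,s}<u_{j,i}$ iff $(t,s)<(j,i)$ lexicographically, and $u^*_{t,s}<u^*_{j,i}$ iff $(j,i)<(t,s)$ lexicographically; extend it degree-lexicographically to $X^*$ (shorter monomials are smaller; monomials of equal length are compared at the first differing letter). For $0\ne p\in k\langle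 X\rangle$, $\mathrm{tip}(p)$ is the $\le$-largest monomial with nonzero coefficient in $p$, and $\mathrm{Tip}(I)=\{\mathrm{tip}(p):0\ne p\in I\}$. *)

theory Defs
  imports Main
begin

text \<open>Symbols: U j i stands for u_{j,i}, Us j i for u*_{j,i}.\<close>
datatype sym = U nat nat | Us nat nat

definition Xset :: "nat \<Rightarrow> sym set" where
  "Xset n = {U j i | j i. j \<in> {1..n} \<and> i \<in> {1..n}} \<union> {Us j i | j i. j \<in> {1..n} \<and> i \<in> {1..n}}"

fun conj_sym :: "sym \<Rightarrow> sym" where
  "conj_sym (U j i) = Us j i"
| "conj_sym (Us j i) = U j i"

definition rr :: "nat \<Rightarrow> nat \<Rightarrow> nat" where
  "rr n i = n + 1 - i"

text \<open>Matrices with entries in X, as functions of (row, column).\<close>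
type_synonym smat = "nat \<Rightarrow> nat \<Rightarrow> sym"

definition mat_t :: "smat \<Rightarrow> smat" where
  "mat_t v = (\<lambda>j i. v i j)"

definition mat_star :: "nat \<Rightarrow> smat \<Rightarrow> smat" where
  "mat_star n v = (\<lambda>j i. conj_sym (v (rr n j) (rr n i)))"

definition mat_dag :: "nat \<Rightarrow> smat \<Rightarrow> smat" where
  "mat_dag n v = (\<lambda>j i. conj_sym (v (rr n i) (rr n j)))"

definition umat :: smat where
  "umat = (\<lambda>j i. U j i)"

definition Mset :: "nat \<Rightarrow> smat set" where
  "Mset n = {umat, mat_t umat, mat_star n umat, mat_dag n umat}"

text \<open>Noncommutative polynomials k<X>: finitely supported coefficient functions on
  words (the free monoid X^* as lists), supported on words over X.\<close>
definition poly_on :: "nat \<Rightarrow> (sym list \<Rightarrow> 'k::field) \<Rightarrow> bool" where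
  "poly_on n p \<longleftrightarrow> finite {w. p w \<noteq> 0} \<and> (\<forall>w. p w \<noteq> 0 \<longrightarrow> set w \<subseteq> Xset n)"

definition padd :: "(sym list \<Rightarrow> 'k::field) \<Rightarrow> (sym list \<Rightarrow> 'k) \<Rightarrow> sym list \<Rightarrow> 'k" where
  "padd p q = (\<lambda>w. p w + q w)"

definition pmul :: "(sym list \<Rightarrow> 'k::field) \<Rightarrow> (sym list \<Rightarrow> 'k) \<Rightarrow> sym list \<Rightarrow> 'k" where
  "pmul p q = (\<lambda>w. \<Sum>k\<le>length w. p (take k w) * q (drop k w))"

definition relpoly :: "nat \<Rightarrow> smat \<Rightarrow> nat \<Rightarrow> nat \<Rightarrow> sym list \<Rightarrow> 'k::field" where
  "relpoly n v j i = (\<lambda>w. (\<Sum>s\<in>{1..n}. if w = [v j (rr n s), mat_dag n v s (rr n i)] then 1 else 0)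
                        - (if j = i \<and> w = [] then 1 else 0))"

definition Rset :: "nat \<Rightarrow> (sym list \<Rightarrow> 'k::field) set" where
  "Rset n = {relpoly n v j i | v j i. v \<in> Mset n \<and> j \<in> {1..n} \<and> i \<in> {1..n}}"

inductive_set ideal_gen :: "nat \<Rightarrow> (sym list \<Rightarrow> 'k::field) set \<Rightarrow> (sym list \<Rightarrow> 'k) set"
  for n G where
  zero: "(\<lambda>_. 0) \<in> ideal_gen n G"
| gen: "g \<in> G \<Longrightarrow> poly_on n a \<Longrightarrow> poly_on n b \<Longrightarrow> pmul (pmul a g) b \<in> ideal_gen n G"
| add: "p \<in> ideal_gen n G \<Longrightarrow> q \<in> ideal_gen n G \<Longrightarrow> padd p q \<in> ideal_gen n G"

definition pair_less :: "nat \<times> nat \<Rightarrow> nat \<times> nat \<Rightarrow> bool" where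
  "pair_less a b \<longleftrightarrow> fst a < fst b \<or> (fst a = fst b \<and> snd a < snd b)"

fun sym_less :: "sym \<Rightarrow> sym \<Rightarrow> bool" where
  "sym_less (Us t s) (U j i) = True"
| "sym_less (U t s) (Us j i) = False"
| "sym_less (U t s) (U j i) = pair_less (t, s) (j, i)"
| "sym_less (Us t s) (Us j i) = pair_less (j, i) (t, s)"

definition word_less :: "sym list \<Rightarrow> sym list \<Rightarrow> bool" where
  "word_less v w \<longleftrightarrow> length v < length w \<or>
     (length v = length w \<and> (\<exists>p a b s t. v = p @ a # s \<and> w = p @ b # t \<and> sym_less a b))"

definition tip :: "(sym list \<Rightarrow> 'k::field) \<Rightarrow> sym list" where
  "tip p = (THE w. p w \<noteq> 0 \<and> (\<forall>v. p v \<noteq> 0 \<longrightarrow> v = w \<or> word_less v w))"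

definition Tip :: "(sym list \<Rightarrow> 'k::field) set \<Rightarrow> sym list set" where
  "Tip I = {tip p | p. p \<in> I \<and> p \<noteq> (\<lambda>_. 0)}"

definition mon_ideal :: "nat \<Rightarrow> sym list set \<Rightarrow> sym list set" where
  "mon_ideal n T = {a @ t @ b | a t b. t \<in> T \<and> a \<in> lists (Xset n) \<and> b \<in> lists (Xset n)}"

end

theory Submission
  imports Defs "HOL-Library.Function_Algebras"
begin

text \<open>This is Bergman's diamond lemma. Call x g y (g a relation, x y words) a reduction with leading
  word x tip(g) y, and let I_W be the span of the reductions with leading word below W. If the
  relations are monic and any two reductions with the same leading word W agree modulo I_W (the
  ambiguities resolve), then by well-founded induction on W every nonzero element of the span of
  reductions not above W, in particular every nonzero element of the ideal, has a reducible tip.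
  Ambiguities at disjoint positions always resolve. The relations in R are the entries of
  v v^H - 1 for four letter matrices v; their tips are quadratic, the inclusion ambiguities resolve
  by the trace identity tr(v v^H) = tr(v^t (v^t)^H), and the overlaps by associativity,
  (v v^H - 1) v = v (v^H v - 1).\<close>

abbreviation word_le :: "sym list \<Rightarrow> sym list \<Rightarrow> bool" where
  "word_le v w \<equiv> v = w \<or> word_less v w"

lemma sym_less_irrefl: "\<not> sym_less a a"
  by (cases a) (auto simp: pair_less_def)

lemma sym_less_trans: "sym_less a b \<Longrightarrow> sym_less b c \<Longrightarrow> sym_less a c"
  by (cases a; cases b; cases c) (auto simp: pair_less_def)

lemma sym_less_linear: "a \<noteq> b \<Longrightarrow> sym_less a b \<or> sym_less b a"
  by (cases a; cases b) (auto simp: pair_less_def)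

definition sym_less_rel :: "(sym \<times> sym) set" where
  "sym_less_rel = {(a, b). sym_less a b}"

lemma word_less_iff_lenlex: "word_less v w \<longleftrightarrow> (v, w) \<in> lenlex sym_less_rel"
  by (auto simp: word_less_def lenlex_conv lex_conv sym_less_rel_def)

lemma trans_sym_less_rel: "trans sym_less_rel"
  by (auto simp: trans_def sym_less_rel_def intro: sym_less_trans)

lemma word_less_irrefl: "\<not> word_less w w"
  by (simp add: word_less_iff_lenlex lenlex_irreflexive sym_less_rel_def sym_less_irrefl)

lemma word_less_trans: "word_less u v \<Longrightarrow> word_less v w \<Longrightarrow> word_less u w"
  unfolding word_less_iff_lenlex using lenlex_trans trans_sym_less_rel by blast

lemma word_less_asym: "word_less u v \<Longrightarrow> \<not> word_less v u"
  using word_less_trans word_less_irrefl by blast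

lemma word_less_linear:
  assumes "v \<noteq> w"
  shows "word_less v w \<or> word_less w v"
proof -
  have "total sym_less_rel"
    by (auto simp: total_on_def sym_less_rel_def dest: sym_less_linear)
  from total_lenlex[OF this] assms show ?thesis
    by (auto simp: total_on_def word_less_iff_lenlex)
qed

lemma word_le_trans: "word_le u v \<Longrightarrow> word_le v w \<Longrightarrow> word_le u w"
  using word_less_trans by blast

lemma word_less_append_context: "word_less v w \<Longrightarrow> word_less (x @ v @ y) (x @ w @ y)"
  unfolding word_less_iff_lenlex
  by (simp add: lenlex_append1 irrefl_def sym_less_rel_def sym_less_irrefl flip: append_assoc)

lemma word_less_of_length: "length v < length w \<Longrightarrow> word_less v w"
  by (simp add: word_less_def)

lemma word_less_Cons: "sym_less a b \<Longrightarrow> length v = length w \<Longrightarrow> word_less (a # v) (b # w)"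
  unfolding word_less_def by (rule disjI2, simp, rule exI[of _ "[]"], auto)

lemma finite_Xset: "finite (Xset n)"
proof -
  have "Xset n \<subseteq> (\<lambda>(j, i). U j i) ` ({1..n} \<times> {1..n}) \<union>
      (\<lambda>(j, i). Us j i) ` ({1..n} \<times> {1..n})"
    by (auto simp: Xset_def)
  then show ?thesis by (rule finite_subset) auto
qed

text \<open>The letter order is not well-founded on all letters (Us 1 1, Us 1 2, ... descend), only on
  the finite alphabet Xset n.\<close>

lemma wf_word_less: "wf {(v, w). v \<in> lists (Xset n) \<and> w \<in> lists (Xset n) \<and> word_less v w}"
proof -
  let ?R = "sym_less_rel \<inter> (Xset n \<times> Xset n)"
  have "trans ?R" using trans_sym_less_rel by (auto simp: trans_def)
  then have "acyclic ?R"
    unfolding acyclic_irrefl trancl_id[OF \<open>trans ?R\<close>]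
    by (auto simp: irrefl_def sym_less_rel_def sym_less_irrefl)
  moreover have "finite ?R" using finite_Xset by blast
  ultimately have "wf ?R"
    by (simp add: finite_acyclic_wf)
  then have "wf (lenlex ?R)" ..
  moreover have "(v, w) \<in> lenlex ?R"
    if "v \<in> lists (Xset n)" "w \<in> lists (Xset n)" "word_less v w" for v w
  proof (cases "length v < length w")
    case False
    with that obtain p x y s t where "v = p @ x # s" "w = p @ y # t" "sym_less x y" "length v = length w"
      by (auto simp: word_less_def)
    with that show ?thesis by (simp add: lenlex_conv lex_conv sym_less_rel_def) blast
  qed (simp add: lenlex_conv)
  ultimately show ?thesis
    by (blast intro: wf_subset)
qed

lemma tip_eqI:
  assumes "p w \<noteq> 0" "\<And>v. p v \<noteq> 0 \<Longrightarrow> word_le v w"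
  shows "tip p = w"
  unfolding tip_def using assms word_less_asym by (intro the_equality) blast+

definition monom :: "sym list \<Rightarrow> sym list \<Rightarrow> 'k::field" where
  "monom w = (\<lambda>z. if z = w then 1 else 0)"

definition smult :: "'k \<Rightarrow> (sym list \<Rightarrow> 'k) \<Rightarrow> sym list \<Rightarrow> 'k::field" where
  "smult c p = (\<lambda>z. c * p z)"

text \<open>The product x p y for words x and y, cf. pmul_monom_sandwich.\<close>

definition sandwich ::
  "sym list \<Rightarrow> (sym list \<Rightarrow> 'k::field) \<Rightarrow> sym list \<Rightarrow> sym list \<Rightarrow> 'k" where
  "sandwich x p y = (\<lambda>z. if \<exists>u. z = x @ u @ y then p (THE u. z = x @ u @ y) else 0)"

lemma sum_fun_apply: "(\<Sum>i\<in>A. f i) z = (\<Sum>i\<in>A. f i z)"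
  by (induct A rule: infinite_finite_induct) auto

lemma monom_apply: "monom w z = (if z = w then 1 else 0)"
  by (simp add: monom_def)

lemma smult_apply [simp]: "smult c p z = c * p z"
  by (simp add: smult_def)

lemma smult_one [simp]: "smult 1 p = p"
  by (simp add: smult_def)

lemma smult_smult: "smult a (smult b p) = smult (a * b) p"
  by (rule ext) simp

lemma smult_minus_one: "smult (-1) p = - p"
  by (rule ext) simp

lemma smult_sum: "smult c (\<Sum>i\<in>A. f i) = (\<Sum>i\<in>A. smult c (f i))"
  by (rule ext) (simp add: sum_fun_apply sum_distrib_left)

lemma sandwich_apply [simp]: "sandwich x p y (x @ u @ y) = p u"
  by (auto simp: sandwich_def)

lemma sandwich_outside: "\<nexists>u. z = x @ u @ y \<Longrightarrow> sandwich x p y z = 0"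
  by (auto simp: sandwich_def)

lemma sandwich_nonzeroE:
  assumes "sandwich x p y z \<noteq> 0"
  obtains u where "z = x @ u @ y" "p u \<noteq> 0"
  using assms by (cases "\<exists>u. z = x @ u @ y") (auto simp: sandwich_outside)

lemma sandwich_add: "sandwich x (p + q) y = sandwich x p y + sandwich x q y"
  by (rule ext) (simp add: sandwich_def)

lemma sandwich_diff: "sandwich x (p - q) y = sandwich x p y - sandwich x q y"
  by (rule ext) (simp add: sandwich_def)

lemma sandwich_smult: "sandwich x (smult c p) y = smult c (sandwich x p y)"
  by (rule ext) (simp add: sandwich_def)

lemma sandwich_zero [simp]: "sandwich x 0 y = 0"
  by (rule ext) (simp add: sandwich_def)

lemma sandwich_sum: "sandwich x (\<Sum>i\<in>A. f i) y = (\<Sum>i\<in>A. sandwich x (f i) y)"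
proof (induct A rule: infinite_finite_induct)
  case (insert a A)
  then show ?case by (metis sum.insert sandwich_add)
qed (metis sum.infinite sandwich_zero, metis sum.empty sandwich_zero)

lemma sandwich_monom: "sandwich x (monom w) y = monom (x @ w @ y)"
  by (rule ext) (auto simp: sandwich_def monom_apply)

lemma sandwich_Nil [simp]: "sandwich [] p [] = p"
  by (rule ext) (simp add: sandwich_def)

lemma sandwich_sandwich: "sandwich a (sandwich x p y) b = sandwich (a @ x) p (y @ b)"
proof (rule ext)
  fix z
  show "sandwich a (sandwich x p y) b z = sandwich (a @ x) p (y @ b) z"
  proof (cases "\<exists>u v. z = a @ u @ b \<and> u = x @ v @ y")
    case True
    then show ?thesis by (metis append_assoc sandwich_apply)
  next
    case False
    then have "\<nexists>v. z = (a @ x) @ v @ y @ b" by auto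
    with False show ?thesis
      by (cases "\<exists>u. z = a @ u @ b") (auto simp: sandwich_outside)
  qed
qed

lemma sandwich_eq_sum_monom:
  assumes "finite S" "\<And>u. p u \<noteq> 0 \<Longrightarrow> u \<in> S"
  shows "sandwich x p y = (\<Sum>u\<in>S. smult (p u) (monom (x @ u @ y)))"
proof (rule ext)
  fix z
  show "sandwich x p y z = (\<Sum>u\<in>S. smult (p u) (monom (x @ u @ y))) z"
  proof (cases "\<exists>u. z = x @ u @ y")
    case True
    then obtain u0 where u0: "z = x @ u0 @ y" by blast
    have "(\<Sum>u\<in>S. smult (p u) (monom (x @ u @ y))) z = (\<Sum>u\<in>S. if u = u0 then p u else 0)"
      unfolding sum_fun_apply by (rule sum.cong) (auto simp: monom_apply u0)
    also have "\<dots> = p u0" using assms by (auto simp: sum.delta)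
    finally show ?thesis using u0 by simp
  next
    case False
    then show ?thesis by (auto simp: sandwich_outside sum_fun_apply monom_apply)
  qed
qed

lemma poly_eq_sum_monom:
  assumes "finite {w. a w \<noteq> 0}"
  shows "a = (\<Sum>x | a x \<noteq> 0. smult (a x) (monom x))"
  using sandwich_eq_sum_monom[OF assms, where x = "[]" and y = "[]"] by simp

lemma pmul_add_left: "pmul (p + p') q = pmul p q + pmul p' q"
  by (rule ext) (simp add: pmul_def distrib_right sum.distrib)

lemma pmul_add_right: "pmul q (p + p') = pmul q p + pmul q p'"
  by (rule ext) (simp add: pmul_def distrib_left sum.distrib)

lemma pmul_smult_left: "pmul (smult c p) q = smult c (pmul p q)"
  by (rule ext) (simp add: pmul_def sum_distrib_left mult.assoc)

lemma pmul_smult_right: "pmul q (smult c p) = smult c (pmul q p)"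
  by (rule ext) (simp add: pmul_def sum_distrib_left algebra_simps)

lemma pmul_zero_left: "pmul 0 q = 0"
  by (rule ext) (simp add: pmul_def)

lemma pmul_zero_right: "pmul q 0 = 0"
  by (rule ext) (simp add: pmul_def)

lemma pmul_sum_left: "pmul (\<Sum>i\<in>A. f i) q = (\<Sum>i\<in>A. pmul (f i) q)"
proof (induct A rule: infinite_finite_induct)
  case (insert a A)
  then show ?case by (metis sum.insert pmul_add_left)
qed (metis sum.infinite pmul_zero_left, metis sum.empty pmul_zero_left)

lemma pmul_sum_right: "pmul q (\<Sum>i\<in>A. f i) = (\<Sum>i\<in>A. pmul q (f i))"
proof (induct A rule: infinite_finite_induct)
  case (insert a A)
  then show ?case by (metis sum.insert pmul_add_right)
qed (metis sum.infinite pmul_zero_right, metis sum.empty pmul_zero_right)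

lemma pmul_monom_left: "pmul (monom x) q = sandwich x q []"
proof (rule ext)
  fix z
  show "pmul (monom x) q z = sandwich x q [] z"
  proof (cases "\<exists>u. z = x @ u")
    case True
    then obtain u where u: "z = x @ u" by blast
    have "pmul (monom x) q z = (\<Sum>k\<le>length z. if k = length x then q (drop k z) else 0)"
      unfolding pmul_def monom_apply
    proof (rule sum.cong)
      fix k assume "k \<in> {..length z}"
      then have kz: "k \<le> length z" by simp
      have "(take k z = x) = (k = length x)"
      proof
        assume t: "take k z = x"
        have "length (take k z) = length x" using t by simp
        then show "k = length x" using kz by simp
      next
        assume "k = length x" then show "take k z = x" using u by simp
      qed
      then show "(if take k z = x then 1 else 0) * q (drop k z) = (if k = length x then q (drop k z) else 0)"
        by simp
    qed simp
    also have "\<dots> = q u" using u by simp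
    finally show ?thesis using u sandwich_apply[of x q "[]" u] by simp
  next
    case False
    then have "\<And>k. take k z \<noteq> x" by (metis append_take_drop_id)
    then have "pmul (monom x) q z = 0" unfolding pmul_def monom_apply by simp
    moreover have "sandwich x q [] z = 0" using False by (intro sandwich_outside) simp
    ultimately show ?thesis by simp
  qed
qed

lemma pmul_monom_right: "pmul q (monom y) = sandwich [] q y"
proof (rule ext)
  fix z
  show "pmul q (monom y) z = sandwich [] q y z"
  proof (cases "\<exists>u. z = u @ y")
    case True
    then obtain u where u: "z = u @ y" by blast
    have "pmul q (monom y) z = (\<Sum>k\<le>length z. if k = length u then q (take k z) else 0)"
      unfolding pmul_def monom_apply
    proof (rule sum.cong)
      fix k assume "k \<in> {..length z}"
      then have kz: "k \<le> length z" by simp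
      have "(drop k z = y) = (k = length u)"
      proof
        assume d: "drop k z = y"
        have "length (drop k z) = length y" using d by simp
        then have "length z - k = length y" by simp
        then show "k = length u" using kz u by simp
      next
        assume "k = length u" then show "drop k z = y" using u by simp
      qed
      then show "q (take k z) * (if drop k z = y then 1 else 0) = (if k = length u then q (take k z) else 0)"
        by simp
    qed simp
    also have "\<dots> = q u" using u by simp
    finally show ?thesis using u sandwich_apply[of "[]" q y u] by simp
  next
    case False
    then have "\<And>k. drop k z \<noteq> y" by (metis append_take_drop_id)
    then have "pmul q (monom y) z = 0" unfolding pmul_def monom_apply by simp
    moreover have "sandwich [] q y z = 0" using False by (intro sandwich_outside) simp
    ultimately show ?thesis by simp
  qed
qed

lemma pmul_monom_sandwich: "pmul (pmul (monom x) g) (monom y) = sandwich x g y"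
  by (simp add: pmul_monom_left pmul_monom_right sandwich_sandwich)

lemma pmul_pmul_eq_sum_sandwich:
  assumes "finite {w. a w \<noteq> 0}" "finite {w. b w \<noteq> 0}"
  shows "pmul (pmul a g) b =
    (\<Sum>y | b y \<noteq> 0. \<Sum>x | a x \<noteq> 0. smult (b y) (smult (a x) (sandwich x g y)))"
proof -
  have "pmul (pmul a g) b = pmul (pmul (\<Sum>x | a x \<noteq> 0. smult (a x) (monom x)) g)
      (\<Sum>y | b y \<noteq> 0. smult (b y) (monom y))"
    using poly_eq_sum_monom[OF assms(1)] poly_eq_sum_monom[OF assms(2)]
    by (rule arg_cong2[where f = "\<lambda>a b. pmul (pmul a g) b"])
  then show ?thesis
    by (simp add: pmul_sum_left pmul_sum_right pmul_smult_left pmul_smult_right smult_sum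
        pmul_monom_sandwich)
qed

text \<open>The span of the elementary reductions x g y (g \<in> G) whose leading word x tip(g) y lies in S.
  With S the words below, resp. not above, W this is Bergman's I_W, resp. I_{\<le>W}.\<close>

inductive_set rel_span ::
  "nat \<Rightarrow> (sym list \<Rightarrow> 'k::field) set \<Rightarrow> sym list set \<Rightarrow> (sym list \<Rightarrow> 'k) set"
  for n G S where
  zero: "0 \<in> rel_span n G S"
| reduction: "g \<in> G \<Longrightarrow> x \<in> lists (Xset n) \<Longrightarrow> y \<in> lists (Xset n) \<Longrightarrow>
    x @ tip g @ y \<in> S \<Longrightarrow> sandwich x g y \<in> rel_span n G S"
| add: "p \<in> rel_span n G S \<Longrightarrow> q \<in> rel_span n G S \<Longrightarrow> p + q \<in> rel_span n G S"
| smult: "p \<in> rel_span n G S \<Longrightarrow> smult c p \<in> rel_span n G S"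

abbreviation span_below ::
  "nat \<Rightarrow> (sym list \<Rightarrow> 'k::field) set \<Rightarrow> sym list \<Rightarrow> (sym list \<Rightarrow> 'k) set" where
  "span_below n G W \<equiv> rel_span n G {v. word_less v W}"

abbreviation span_atmost ::
  "nat \<Rightarrow> (sym list \<Rightarrow> 'k::field) set \<Rightarrow> sym list \<Rightarrow> (sym list \<Rightarrow> 'k) set" where
  "span_atmost n G W \<equiv> rel_span n G {v. word_le v W}"

lemma rel_span_mono:
  assumes "p \<in> rel_span n G S" "S \<subseteq> S'"
  shows "p \<in> rel_span n G S'"
  using assms(1) by induct (use assms(2) in \<open>blast intro: rel_span.intros\<close>)+

lemma rel_span_uminus: "p \<in> rel_span n G S \<Longrightarrow> - p \<in> rel_span n G S"
  using rel_span.smult[of p n G S "-1"] by (simp add: smult_minus_one)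

lemma rel_span_diff: "p \<in> rel_span n G S \<Longrightarrow> q \<in> rel_span n G S \<Longrightarrow> p - q \<in> rel_span n G S"
  using rel_span.add[OF _ rel_span_uminus] by (simp only: diff_conv_add_uminus)

lemma rel_span_sum:
  "(\<And>i. i \<in> A \<Longrightarrow> f i \<in> rel_span n G S) \<Longrightarrow> (\<Sum>i\<in>A. f i) \<in> rel_span n G S"
proof (induct A rule: infinite_finite_induct)
  case (insert a A)
  then show ?case by (metis sum.insert rel_span.add insertI1 insertI2)
qed (metis sum.infinite rel_span.zero, metis sum.empty rel_span.zero)

lemma rel_span_sandwich:
  assumes "p \<in> rel_span n G S" "a \<in> lists (Xset n)" "b \<in> lists (Xset n)"
  shows "sandwich a p b \<in> rel_span n G ((\<lambda>v. a @ v @ b) ` S)"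
  using assms(1)
proof induct
  case (reduction g x y)
  then have "sandwich (a @ x) g (y @ b) \<in> rel_span n G ((\<lambda>v. a @ v @ b) ` S)"
    using assms(2,3) by (intro rel_span.reduction) auto
  then show ?case by (simp add: sandwich_sandwich)
qed (metis sandwich_zero rel_span.zero, metis sandwich_add rel_span.add,
     metis sandwich_smult rel_span.smult)

lemma span_below_sandwich:
  assumes "p \<in> span_below n G W" "a \<in> lists (Xset n)" "b \<in> lists (Xset n)"
  shows "sandwich a p b \<in> span_below n G (a @ W @ b)"
  using rel_span_sandwich[OF assms] by (rule rel_span_mono) (auto intro: word_less_append_context)

lemma rel_span_diff_of_sum_eq:
  assumes "finite A" "a \<in> A" "finite B" "b \<in> B" "(\<Sum>k\<in>A. F k) = (\<Sum>l\<in>B. H l)"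
    "\<And>k. k \<in> A - {a} \<Longrightarrow> F k \<in> rel_span n G S"
    "\<And>l. l \<in> B - {b} \<Longrightarrow> H l \<in> rel_span n G S"
  shows "F a - H b \<in> rel_span n G S"
proof -
  have "F a + (\<Sum>k\<in>A - {a}. F k) = H b + (\<Sum>l\<in>B - {b}. H l)"
    using assms(5) sum.remove[OF assms(1,2), of F] sum.remove[OF assms(3,4), of H] by simp
  then have "F a - H b = (\<Sum>l\<in>B - {b}. H l) - (\<Sum>k\<in>A - {a}. F k)"
    by (simp add: algebra_simps)
  moreover have "(\<Sum>l\<in>B - {b}. H l) - (\<Sum>k\<in>A - {a}. F k) \<in> rel_span n G S"
    by (intro rel_span_diff rel_span_sum assms(6,7))
  ultimately show ?thesis by simp
qed

locale monic_relations =
  fixes n :: nat and G :: "(sym list \<Rightarrow> 'k::field) set"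
  assumes poly_on_rel: "g \<in> G \<Longrightarrow> poly_on n g"
    and coeff_tip: "g \<in> G \<Longrightarrow> g (tip g) = 1"
    and support_le_tip: "g \<in> G \<Longrightarrow> g u \<noteq> 0 \<Longrightarrow> word_le u (tip g)"
begin

lemma support_lists: "g \<in> G \<Longrightarrow> g u \<noteq> 0 \<Longrightarrow> u \<in> lists (Xset n)"
  using poly_on_rel by (auto simp: poly_on_def)

lemma tip_lists: "g \<in> G \<Longrightarrow> tip g \<in> lists (Xset n)"
  by (rule support_lists[of g]) (simp_all add: coeff_tip)

lemma sandwich_coeff_tip [simp]: "g \<in> G \<Longrightarrow> sandwich x g y (x @ tip g @ y) = 1"
  by (simp only: sandwich_apply coeff_tip)

lemma sandwich_support_le:
  assumes "g \<in> G" "sandwich x g y z \<noteq> 0"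
  shows "word_le z (x @ tip g @ y)"
proof -
  obtain u where "z = x @ u @ y" "g u \<noteq> 0"
    using assms(2) by (rule sandwich_nonzeroE)
  with support_le_tip[OF assms(1)] show ?thesis
    using word_less_append_context by blast
qed

lemma tip_sandwich: "g \<in> G \<Longrightarrow> tip (sandwich x g y) = x @ tip g @ y"
  by (rule tip_eqI) (auto simp: coeff_tip sandwich_support_le)

lemma rel_span_support:
  assumes "p \<in> rel_span n G S" "p z \<noteq> 0"
  shows "\<exists>v\<in>S. word_le z v"
  using assms
proof induct
  case (add p q)
  then show ?case by (metis add.left_neutral add.right_neutral plus_fun_apply)
qed (auto dest: sandwich_support_le)

lemma span_below_support: "p \<in> span_below n G W \<Longrightarrow> p z \<noteq> 0 \<Longrightarrow> word_less z W"
  using rel_span_support word_less_trans by fastforce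

lemma span_atmost_support: "p \<in> span_atmost n G W \<Longrightarrow> p z \<noteq> 0 \<Longrightarrow> word_le z W"
  using rel_span_support word_le_trans by fastforce

text \<open>Only finitely many reductions occur in p; the largest of their leading words bounds all.\<close>

lemma rel_span_imp_span_atmost:
  assumes "p \<in> rel_span n G S" "p \<noteq> 0"
  shows "\<exists>W \<in> S \<inter> lists (Xset n). p \<in> span_atmost n G W"
  using assms
proof induct
  case (reduction g x y)
  then show ?case
    using tip_lists[of g] by (auto intro!: bexI[of _ "x @ tip g @ y"] rel_span.reduction)
next
  case (add p q)
  show ?case
  proof (cases "p = 0 \<or> q = 0")
    case True
    with add show ?thesis by auto
  next
    case False
    with add obtain V W where VW: "V \<in> S \<inter> lists (Xset n)" "p \<in> span_atmost n G V"
        "W \<in> S \<inter> lists (Xset n)" "q \<in> span_atmost n G W"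
      by blast
    obtain U where "U \<in> {V, W}" "word_le V U" "word_le W U"
      using word_less_linear[of V W] by blast
    then have "p \<in> span_atmost n G U" "q \<in> span_atmost n G U"
      using VW(2,4) by (auto elim!: rel_span_mono dest: word_less_trans)
    with VW \<open>U \<in> {V, W}\<close> show ?thesis by (blast intro: rel_span.add)
  qed
next
  case (smult p c)
  then have "p \<noteq> 0" by (auto simp: smult_def)
  with smult show ?case by (blast intro: rel_span.smult)
qed simp

lemma ideal_gen_subset_rel_span: "ideal_gen n G \<subseteq> rel_span n G UNIV"
proof
  fix p
  assume "p \<in> ideal_gen n G"
  then show "p \<in> rel_span n G UNIV"
  proof induct
    case zero
    then show ?case by (simp only: zero_fun_def[symmetric] rel_span.zero)
  next
    case (gen g a b)
    then have fin: "finite {w. a w \<noteq> 0}" "finite {w. b w \<noteq> 0}"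
      by (auto simp: poly_on_def)
    show ?case
      unfolding pmul_pmul_eq_sum_sandwich[OF fin]
      by (intro rel_span_sum rel_span.smult rel_span.reduction) (use gen in \<open>auto simp: poly_on_def\<close>)
  next
    case (add p q)
    have "padd p q = p + q"
      by (simp add: padd_def fun_eq_iff)
    with add show ?case
      by (simp only: rel_span.add)
  qed
qed

lemma mon_ideal_subset_Tip: "mon_ideal n (tip ` G) \<subseteq> Tip (ideal_gen n G)"
proof
  fix w
  assume "w \<in> mon_ideal n (tip ` G)"
  then obtain a b g where g: "g \<in> G" "a \<in> lists (Xset n)" "b \<in> lists (Xset n)"
    and w: "w = a @ tip g @ b"
    unfolding mon_ideal_def by blast
  have "poly_on n (monom a :: sym list \<Rightarrow> 'k)" "poly_on n (monom b :: sym list \<Rightarrow> 'k)"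
    using g by (auto simp: poly_on_def monom_apply)
  with g have "sandwich a g b \<in> ideal_gen n G"
    by (metis ideal_gen.gen pmul_monom_sandwich)
  moreover have "sandwich a g b \<noteq> (\<lambda>_. 0)"
    using g w by (metis sandwich_coeff_tip zero_neq_one)
  ultimately show "w \<in> Tip (ideal_gen n G)"
    unfolding Tip_def using tip_sandwich[OF g(1), of a b] w by force
qed

lemma span_atmost_irreducible:
  assumes "W \<notin> mon_ideal n (tip ` G)" "p \<in> span_atmost n G W"
  shows "p \<in> span_below n G W"
  using assms(2)
proof induct
  case (reduction g x y)
  moreover from reduction assms(1) have "x @ tip g @ y \<noteq> W"
    unfolding mon_ideal_def by blast
  ultimately show ?case by (blast intro: rel_span.reduction)
qed (blast intro: rel_span.intros)+

end

text \<open>Expanding the other relation in either reduction of x tip(g1) m tip(g2) y gives the same double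
  sum; all its terms except the one at (tip g1, tip g2) lie below that word.\<close>

lemma (in monic_relations) disjoint_reductions_resolvable:
  assumes g1: "g1 \<in> G" and g2: "g2 \<in> G"
    and x: "x \<in> lists (Xset n)" and m: "m \<in> lists (Xset n)" and y: "y \<in> lists (Xset n)"
  shows "sandwich x g1 (m @ tip g2 @ y) - sandwich (x @ tip g1 @ m) g2 y
    \<in> span_below n G (x @ tip g1 @ m @ tip g2 @ y)"
proof -
  let ?S1 = "{u. g1 u \<noteq> 0}" and ?S2 = "{u. g2 u \<noteq> 0}"
  let ?W = "x @ tip g1 @ m @ tip g2 @ y"
  let ?F = "\<lambda>w. smult (g2 w) (sandwich x g1 (m @ w @ y))"
  let ?H = "\<lambda>u. smult (g1 u) (sandwich (x @ u @ m) g2 y)"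
  have fin: "finite ?S1" "finite ?S2"
    using poly_on_rel g1 g2 by (auto simp: poly_on_def)
  have tips: "tip g1 \<in> ?S1" "tip g2 \<in> ?S2"
    using g1 g2 by (simp_all add: coeff_tip)
  have "(\<Sum>w\<in>?S2. ?F w) = (\<Sum>w\<in>?S2. \<Sum>u\<in>?S1. smult (g2 w * g1 u) (monom (x @ u @ m @ w @ y)))"
    by (simp add: sandwich_eq_sum_monom[OF fin(1)] smult_sum smult_smult)
  also have "\<dots> = (\<Sum>u\<in>?S1. \<Sum>w\<in>?S2. smult (g2 w * g1 u) (monom (x @ u @ m @ w @ y)))"
    by (rule sum.swap)
  also have "\<dots> = (\<Sum>u\<in>?S1. ?H u)"
    by (simp add: sandwich_eq_sum_monom[OF fin(2)] smult_sum smult_smult mult.commute)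
  finally have "?F (tip g2) - ?H (tip g1) \<in> span_below n G ?W"
  proof (rule rel_span_diff_of_sum_eq[OF fin(2) tips(2) fin(1) tips(1)])
    fix w
    assume w: "w \<in> ?S2 - {tip g2}"
    then have "word_less (x @ tip g1 @ m @ w @ y) ?W"
      using support_le_tip[OF g2] word_less_append_context[of w "tip g2" "x @ tip g1 @ m" y] by auto
    with w show "?F w \<in> span_below n G ?W"
      using g1 x m y support_lists[OF g2] by (intro rel_span.smult rel_span.reduction) auto
  next
    fix u
    assume u: "u \<in> ?S1 - {tip g1}"
    then have "word_less ((x @ u @ m) @ tip g2 @ y) ?W"
      using support_le_tip[OF g1] word_less_append_context[of u "tip g1" x "m @ tip g2 @ y"] by auto
    with u show "?H u \<in> span_below n G ?W"
      using g2 x m y support_lists[OF g1] by (intro rel_span.smult rel_span.reduction) auto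
  qed
  then show ?thesis
    using g1 g2 by (simp add: coeff_tip)
qed

lemma two_factor_occurrences_cases:
  assumes eq: "x1 @ t1 @ y1 = x2 @ t2 @ y2" and "length t1 = 2" "length t2 = 2"
    and le: "length x1 \<le> length x2"
  obtains (same) "x2 = x1" "t2 = t1" "y2 = y1"
    | (overlap) a b c where "t1 = [a, b]" "t2 = [b, c]" "x2 = x1 @ [a]" "y1 = c # y2"
    | (disjoint) m where "x2 = x1 @ t1 @ m" "y1 = m @ t2 @ y2"
proof -
  obtain a b where t1: "t1 = [a, b]"
    using \<open>length t1 = 2\<close> by (auto simp: numeral_2_eq_2 length_Suc_conv)
  obtain b' c where t2: "t2 = [b', c]"
    using \<open>length t2 = 2\<close> by (auto simp: numeral_2_eq_2 length_Suc_conv)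
  define r where "r = drop (length x1) x2"
  have "x1 = take (length x1) x2"
    using arg_cong[OF eq, of "take (length x1)"] le by simp
  then have x2: "x2 = x1 @ r"
    unfolding r_def by (metis append_take_drop_id)
  with eq have rest: "t1 @ y1 = r @ t2 @ y2" by simp
  consider "r = []" | a' where "r = [a']" | a' b'' m where "r = a' # b'' # m"
    by (metis list.exhaust)
  then show ?thesis
  proof cases
    case 1
    with rest t1 t2 x2 show ?thesis by (intro same) simp_all
  next
    case (2 a')
    with rest t1 t2 x2 show ?thesis by (intro overlap[of a b c]) simp_all
  next
    case (3 a' b'' m)
    with rest t1 x2 show ?thesis by (intro disjoint[of m]) simp_all
  qed
qed

locale resolvable_relations = monic_relations +
  assumes resolvable:
    "\<lbrakk>g1 \<in> G; g2 \<in> G; x1 \<in> lists (Xset n); y1 \<in> lists (Xset n); x2 \<in> lists (Xset n);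
      y2 \<in> lists (Xset n); x1 @ tip g1 @ y1 = x2 @ tip g2 @ y2\<rbrakk>
     \<Longrightarrow> sandwich x1 g1 y1 - sandwich x2 g2 y2 \<in> span_below n G (x1 @ tip g1 @ y1)"

lemma (in monic_relations) resolvable_relations_if_quadratic:
  assumes quadratic: "\<And>g. g \<in> G \<Longrightarrow> length (tip g) = 2"
    and inclusion_resolvable: "\<And>g1 g2. g1 \<in> G \<Longrightarrow> g2 \<in> G \<Longrightarrow> tip g1 = tip g2 \<Longrightarrow>
      g1 - g2 \<in> span_below n G (tip g1)"
    and overlap_resolvable: "\<And>g1 g2 a b c. g1 \<in> G \<Longrightarrow> g2 \<in> G \<Longrightarrow>
      tip g1 = [a, b] \<Longrightarrow> tip g2 = [b, c] \<Longrightarrow> sandwich [] g1 [c] - sandwich [a] g2 [] \<in> span_below n G [a, b, c]"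
  shows "resolvable_relations n G"
proof -
  have ordered: "sandwich x1 g1 y1 - sandwich x2 g2 y2 \<in> span_below n G (x1 @ tip g1 @ y1)"
    if g: "g1 \<in> G" "g2 \<in> G" and lists: "x1 \<in> lists (Xset n)" "y1 \<in> lists (Xset n)"
      "x2 \<in> lists (Xset n)" "y2 \<in> lists (Xset n)"
      and eq: "x1 @ tip g1 @ y1 = x2 @ tip g2 @ y2" and le: "length x1 \<le> length x2"
    for g1 g2 x1 y1 x2 y2
    using eq quadratic[OF g(1)] quadratic[OF g(2)] le
  proof (cases rule: two_factor_occurrences_cases)
    case same
    then show ?thesis
      using span_below_sandwich[OF inclusion_resolvable[OF g] lists(1,2)] by (simp add: sandwich_diff)
  next
    case (overlap a b c)
    then show ?thesis
      using span_below_sandwich[OF overlap_resolvable[OF g] lists(1,4)]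
      by (simp add: sandwich_diff sandwich_sandwich)
  next
    case (disjoint m)
    then show ?thesis
      using disjoint_reductions_resolvable[OF g lists(1) _ lists(4)] lists(2) by simp
  qed
  show ?thesis
  proof (intro resolvable_relations.intro resolvable_relations_axioms.intro)
    show "monic_relations n G" ..
    fix g1 g2 x1 y1 x2 y2
    assume g: "g1 \<in> G" "g2 \<in> G" and lists: "x1 \<in> lists (Xset n)" "y1 \<in> lists (Xset n)"
      "x2 \<in> lists (Xset n)" "y2 \<in> lists (Xset n)" and eq: "x1 @ tip g1 @ y1 = x2 @ tip g2 @ y2"
    show "sandwich x1 g1 y1 - sandwich x2 g2 y2 \<in> span_below n G (x1 @ tip g1 @ y1)"
    proof (cases "length x1 \<le> length x2")
      case False
      then have "sandwich x2 g2 y2 - sandwich x1 g1 y1 \<in> span_below n G (x1 @ tip g1 @ y1)"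
        using ordered[OF g(2,1) lists(3,4,1,2) eq[symmetric]] eq by simp
      then show ?thesis
        using rel_span_uminus by fastforce
    qed (rule ordered[OF g lists eq])
  qed
qed

context resolvable_relations
begin

text \<open>Modulo I_W, any element of the span of the reductions not above W is a multiple of one
  fixed reduction at W; this is where resolvability enters.\<close>

lemma span_atmost_reduce:
  assumes g: "g \<in> G" "x \<in> lists (Xset n)" "y \<in> lists (Xset n)"
    and p: "p \<in> span_atmost n G (x @ tip g @ y)"
  shows "\<exists>c. p - smult c (sandwich x g y) \<in> span_below n G (x @ tip g @ y)"
  using p
proof induct
  case zero
  have "0 - smult 0 (sandwich x g y) = 0"
    by (rule ext) simp
  then show ?case by (metis rel_span.zero)
next
  case (reduction h u v)
  show ?case
  proof (cases "u @ tip h @ v = x @ tip g @ y")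
    case True
    with reduction g have "sandwich u h v - smult 1 (sandwich x g y) \<in> span_below n G (x @ tip g @ y)"
      using resolvable[of h g u v x y] by simp
    then show ?thesis ..
  next
    case False
    with reduction have "sandwich u h v \<in> span_below n G (x @ tip g @ y)"
      by (blast intro: rel_span.reduction)
    moreover have "sandwich u h v - smult 0 (sandwich x g y) = sandwich u h v"
      by (rule ext) simp
    ultimately show ?thesis by metis
  qed
next
  case (add p q)
  then obtain c d where "p - smult c (sandwich x g y) \<in> span_below n G (x @ tip g @ y)"
    "q - smult d (sandwich x g y) \<in> span_below n G (x @ tip g @ y)"
    by blast
  moreover have "(p + q) - smult (c + d) (sandwich x g y)
      = (p - smult c (sandwich x g y)) + (q - smult d (sandwich x g y))"
    by (rule ext) (simp add: algebra_simps)
  ultimately show ?case by (metis rel_span.add)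
next
  case (smult p a)
  then obtain c where "p - smult c (sandwich x g y) \<in> span_below n G (x @ tip g @ y)"
    by blast
  moreover have "smult a p - smult (a * c) (sandwich x g y) = smult a (p - smult c (sandwich x g y))"
    by (rule ext) (simp add: algebra_simps)
  ultimately show ?case by (metis rel_span.smult)
qed

lemma span_atmost_coeff_zero:
  assumes p: "p \<in> span_atmost n G W" and "p W = 0"
  shows "p \<in> span_below n G W"
proof (cases "W \<in> mon_ideal n (tip ` G)")
  case True
  then obtain x g y where g: "g \<in> G" "x \<in> lists (Xset n)" "y \<in> lists (Xset n)"
    and W: "W = x @ tip g @ y"
    unfolding mon_ideal_def by blast
  with p obtain c where c: "p - smult c (sandwich x g y) \<in> span_below n G W"
    using span_atmost_reduce by blast
  have "(p - smult c (sandwich x g y)) W = 0"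
    using span_below_support[OF c] word_less_irrefl by blast
  with \<open>p W = 0\<close> g W have "c = 0" by (simp add: coeff_tip)
  moreover have "smult 0 (sandwich x g y) = 0"
    by (rule ext) simp
  ultimately show ?thesis
    using c by simp
next
  case False
  from False p show ?thesis by (rule span_atmost_irreducible)
qed

lemma tip_in_mon_ideal:
  assumes "W \<in> lists (Xset n)" "p \<in> span_atmost n G W" "p \<noteq> 0"
  shows "tip p \<in> mon_ideal n (tip ` G)"
  using wf_word_less[of n] assms
proof (induct W arbitrary: p rule: wf_induct_rule)
  case (less W)
  show ?case
  proof (cases "p W = 0")
    case True
    then have "p \<in> span_below n G W"
      using less.prems(2) by (rule span_atmost_coeff_zero[rotated])
    then obtain V where "V \<in> lists (Xset n)" "word_less V W" "p \<in> span_atmost n G V"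
      using rel_span_imp_span_atmost less.prems(3) by blast
    with less show ?thesis by blast
  next
    case False
    then have "tip p = W"
      using span_atmost_support[OF less.prems(2)] by (intro tip_eqI) auto
    moreover have "W \<in> mon_ideal n (tip ` G)"
      using False span_atmost_irreducible[OF _ less.prems(2)] span_below_support word_less_irrefl
      by blast
    ultimately show ?thesis by simp
  qed
qed

theorem Tip_ideal_gen: "Tip (ideal_gen n G) = mon_ideal n (tip ` G)"
proof
  show "Tip (ideal_gen n G) \<subseteq> mon_ideal n (tip ` G)"
  proof
    fix w
    assume "w \<in> Tip (ideal_gen n G)"
    then obtain p where p: "p \<in> ideal_gen n G" "p \<noteq> 0" "w = tip p"
      unfolding Tip_def by (auto simp: zero_fun_def)
    then obtain W where "W \<in> lists (Xset n)" "p \<in> span_atmost n G W"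
      using ideal_gen_subset_rel_span rel_span_imp_span_atmost by blast
    with p show "w \<in> mon_ideal n (tip ` G)"
      using tip_in_mon_ideal by blast
  qed
qed (rule mon_ideal_subset_Tip)

end

lemma conj_sym_conj_sym [simp]: "conj_sym (conj_sym a) = a"
  by (cases a) simp_all

definition conj_transp :: "smat \<Rightarrow> smat" where
  "conj_transp v = (\<lambda>j i. conj_sym (v i j))"

lemma conj_transp_apply [simp]: "conj_transp v j i = conj_sym (v i j)"
  by (simp add: conj_transp_def)

lemma conj_transp_conj_transp [simp]: "conj_transp (conj_transp v) = v"
  by (simp add: conj_transp_def)

lemma mat_t_apply [simp]: "mat_t v j i = v i j"
  by (simp add: mat_t_def)

text \<open>The (j, i) entry of v v^H - 1, where v^H = conj_transp v; up to reindexing the sum this is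
  relpoly (relpoly_eq_unitary_rel).\<close>

definition unitary_rel :: "nat \<Rightarrow> smat \<Rightarrow> nat \<Rightarrow> nat \<Rightarrow> sym list \<Rightarrow> 'k::field" where
  "unitary_rel n v j i =
    (\<Sum>k\<in>{1..n}. monom [v j k, conj_sym (v i k)]) - (if j = i then monom [] else 0)"

definition max_column :: "nat \<Rightarrow> smat \<Rightarrow> nat \<Rightarrow> bool" where
  "max_column n v m \<longleftrightarrow> m \<in> {1..n} \<and>
    (\<forall>j\<in>{1..n}. \<forall>k\<in>{1..n}. k \<noteq> m \<longrightarrow> sym_less (v j k) (v j m))"

lemma max_column_less:
  "max_column n v m \<Longrightarrow> j \<in> {1..n} \<Longrightarrow> k \<in> {1..n} \<Longrightarrow> k \<noteq> m \<Longrightarrow> sym_less (v j k) (v j m)"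
  by (simp add: max_column_def)

lemma unitary_rel_apply:
  "unitary_rel n v j i w =
    (\<Sum>k\<in>{1..n}. if w = [v j k, conj_sym (v i k)] then 1 else 0) - (if j = i \<and> w = [] then 1 else 0)"
  by (simp add: unitary_rel_def sum_fun_apply monom_apply)

lemma sandwich_unitary_rel:
  "sandwich x (unitary_rel n v j i) y =
    (\<Sum>k\<in>{1..n}. monom (x @ [v j k, conj_sym (v i k)] @ y)) - (if j = i then monom (x @ y) else 0)"
  by (simp add: unitary_rel_def sandwich_diff sandwich_sum sandwich_monom)

lemma unitary_rel_support:
  assumes "unitary_rel n v j i w \<noteq> 0"
  shows "w = [] \<or> (\<exists>k\<in>{1..n}. w = [v j k, conj_sym (v i k)])"
  using assms by (auto simp: unitary_rel_apply split: if_splits)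

context
  fixes n m :: nat and v :: smat and j i :: nat
  assumes max: "max_column n v m" and j: "j \<in> {1..n}"
begin

lemma coeff_tip_unitary_rel:
  "(unitary_rel n v j i :: sym list \<Rightarrow> 'k::field) [v j m, conj_sym (v i m)] = 1"
proof -
  have "v j m = v j k \<longleftrightarrow> k = m" if "k \<in> {1..n}" for k
    using max_column_less[OF max j that] sym_less_irrefl by metis
  then have "(\<Sum>k\<in>{1..n}. if [v j m, conj_sym (v i m)] = [v j k, conj_sym (v i k)] then 1 else 0)
      = (\<Sum>k\<in>{1..n}. if k = m then (1::'k) else 0)"
    by (intro sum.cong) auto
  with max show ?thesis
    by (simp add: unitary_rel_apply max_column_def)
qed

lemma support_le_tip_unitary_rel:
  assumes "(unitary_rel n v j i :: sym list \<Rightarrow> 'k::field) w \<noteq> 0"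
  shows "word_le w [v j m, conj_sym (v i m)]"
  using unitary_rel_support[OF assms]
proof (elim disjE bexE)
  fix k
  assume "k \<in> {1..n}" "w = [v j k, conj_sym (v i k)]"
  then show ?thesis
    using max_column_less[OF max j] by (cases "k = m") (auto intro: word_less_Cons)
qed (simp add: word_less_of_length)

lemma tip_unitary_rel: "tip (unitary_rel n v j i :: sym list \<Rightarrow> 'k::field) = [v j m, conj_sym (v i m)]"
  by (rule tip_eqI) (simp_all add: coeff_tip_unitary_rel support_le_tip_unitary_rel)

end

text \<open>The overlap of v v^H - 1 with v^H v - 1 resolves by associativity: (v v^H - 1) v = v (v^H v - 1).\<close>

lemma unitary_rel_overlap_resolvable:
  assumes max: "max_column n v m1" and max': "max_column n (conj_transp v) m2"
    and j: "j \<in> {1..n}" and b: "b \<in> {1..n}"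
    and rels: "\<And>k l. k \<in> {1..n} \<Longrightarrow> l \<in> {1..n} \<Longrightarrow>
      unitary_rel n v k l \<in> G \<and> unitary_rel n (conj_transp v) k l \<in> G"
    and letters: "\<And>k l. k \<in> {1..n} \<Longrightarrow> l \<in> {1..n} \<Longrightarrow> v k l \<in> Xset n"
  shows "sandwich [] (unitary_rel n v j m2) [v m2 b]
      - sandwich [v j m1] (unitary_rel n (conj_transp v) m1 b) []
    \<in> span_below n G [v j m1, conj_sym (v m2 m1), v m2 b]"
proof (rule rel_span_diff_of_sum_eq[where A = "{1..n}" and B = "{1..n}" and a = m2 and b = m1
    and F = "\<lambda>k. sandwich [] (unitary_rel n v j k) [v k b]"
    and H = "\<lambda>l. sandwich [v j l] (unitary_rel n (conj_transp v) l b) []"])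
  show "m2 \<in> {1..n}" "m1 \<in> {1..n}"
    using max max' by (simp_all add: max_column_def)
  have "(\<Sum>k\<in>{1..n}. sandwich [] (unitary_rel n v j k) [v k b])
      = (\<Sum>k\<in>{1..n}. \<Sum>l\<in>{1..n}. monom [v j l, conj_sym (v k l), v k b]) - monom [v j b]"
    using j by (simp add: sandwich_unitary_rel sum_subtractf)
  also have "\<dots> = (\<Sum>l\<in>{1..n}. \<Sum>k\<in>{1..n}. monom [v j l, conj_sym (v k l), v k b]) - monom [v j b]"
    by (subst sum.swap) (rule refl)
  also have "\<dots> = (\<Sum>l\<in>{1..n}. sandwich [v j l] (unitary_rel n (conj_transp v) l b) [])"
    using b by (simp add: sandwich_unitary_rel sum_subtractf)
  finally show "(\<Sum>k\<in>{1..n}. sandwich [] (unitary_rel n v j k) [v k b])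
      = (\<Sum>l\<in>{1..n}. sandwich [v j l] (unitary_rel n (conj_transp v) l b) [])" .
next
  fix k
  assume k: "k \<in> {1..n} - {m2}"
  have "sym_less (conj_sym (v k m1)) (conj_sym (v m2 m1))"
    using max_column_less[OF max', of m1 k] max k by (simp add: max_column_def)
  then have "word_less ([v j m1] @ [conj_sym (v k m1), v k b] @ [])
      ([v j m1] @ [conj_sym (v m2 m1), v m2 b] @ [])"
    by (intro word_less_append_context word_less_Cons) simp_all
  then show "sandwich [] (unitary_rel n v j k) [v k b]
      \<in> span_below n G [v j m1, conj_sym (v m2 m1), v m2 b]"
    using k j b rels letters by (intro rel_span.reduction) (simp_all add: tip_unitary_rel[OF max])
next
  fix l
  assume l: "l \<in> {1..n} - {m1}"
  then show "sandwich [v j l] (unitary_rel n (conj_transp v) l b) []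
      \<in> span_below n G [v j m1, conj_sym (v m2 m1), v m2 b]"
    using max_column_less[OF max j, of l] j b rels letters
    by (intro rel_span.reduction) (simp_all add: tip_unitary_rel[OF max'] word_less_Cons)
qed simp_all

text \<open>Resolved by the trace identity tr(v v^H - 1) = tr(v^t (v^t)^H - 1).\<close>

lemma unitary_rel_inclusion_resolvable:
  assumes max: "max_column n v m" and max': "max_column n (mat_t v) m"
    and rels: "\<And>k l. k \<in> {1..n} \<Longrightarrow> l \<in> {1..n} \<Longrightarrow>
      unitary_rel n v k l \<in> G \<and> unitary_rel n (mat_t v) k l \<in> G"
  shows "unitary_rel n v m m - unitary_rel n (mat_t v) m m \<in> span_below n G [v m m, conj_sym (v m m)]"
proof (rule rel_span_diff_of_sum_eq[where A = "{1..n}" and B = "{1..n}"])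
  show "(\<Sum>k\<in>{1..n}. unitary_rel n v k k) = (\<Sum>l\<in>{1..n}. unitary_rel n (mat_t v) l l)"
    by (simp add: unitary_rel_def sum_subtractf) (rule sum.swap)
next
  fix k
  assume k: "k \<in> {1..n} - {m}"
  then show "unitary_rel n v k k \<in> span_below n G [v m m, conj_sym (v m m)]"
    using max_column_less[OF max', of m k] max rels rel_span.reduction[of _ G "[]" n "[]"]
    by (simp add: max_column_def tip_unitary_rel[OF max] word_less_Cons)
next
  fix l
  assume l: "l \<in> {1..n} - {m}"
  then show "unitary_rel n (mat_t v) l l \<in> span_below n G [v m m, conj_sym (v m m)]"
    using max_column_less[OF max, of m l] max rels rel_span.reduction[of _ G "[]" n "[]"]
    by (simp add: max_column_def tip_unitary_rel[OF max'] word_less_Cons)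
qed (use max in \<open>simp_all add: max_column_def\<close>)

text \<open>Up to the index reversal r, the matrices u^star and u^dagger of M are conj_transp u^t and
  conj_transp u (see Rset_eq).\<close>

definition unitary_mats :: "smat set" where
  "unitary_mats = {umat, mat_t umat, conj_transp umat, conj_transp (mat_t umat)}"

lemma umat_apply [simp]: "umat j i = U j i"
  by (simp add: umat_def)

lemma conj_transp_unitary_mats: "v \<in> unitary_mats \<Longrightarrow> conj_transp v \<in> unitary_mats"
  by (auto simp: unitary_mats_def)

lemma mat_t_unitary_mats: "v \<in> unitary_mats \<Longrightarrow> mat_t v \<in> unitary_mats"
  by (auto simp: unitary_mats_def fun_eq_iff)

lemma unitary_mats_Xset:
  "v \<in> unitary_mats \<Longrightarrow> j \<in> {1..n} \<Longrightarrow> i \<in> {1..n} \<Longrightarrow> v j i \<in> Xset n"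
  by (auto simp: unitary_mats_def Xset_def)

lemma max_column_unitary_mats:
  assumes "1 \<le> n"
  shows "max_column n umat n" "max_column n (mat_t umat) n"
    "max_column n (conj_transp umat) 1" "max_column n (conj_transp (mat_t umat)) 1"
  using assms by (auto simp: max_column_def pair_less_def)

lemma unitary_mats_max_column:
  "v \<in> unitary_mats \<Longrightarrow> 1 \<le> n \<Longrightarrow> \<exists>m. max_column n v m"
  using max_column_unitary_mats unfolding unitary_mats_def by blast

lemma tip_unitary_rel_unitary_mats:
  assumes "1 \<le> n" "j \<in> {1..n}"
  shows "tip (unitary_rel n umat j i :: sym list \<Rightarrow> 'k::field) = [U j n, Us i n]"
    "tip (unitary_rel n (mat_t umat) j i :: sym list \<Rightarrow> 'k) = [U n j, Us n i]"
    "tip (unitary_rel n (conj_transp umat) j i :: sym list \<Rightarrow> 'k) = [Us 1 j, U 1 i]"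
    "tip (unitary_rel n (conj_transp (mat_t umat)) j i :: sym list \<Rightarrow> 'k) = [Us j 1, U i 1]"
  using tip_unitary_rel[OF max_column_unitary_mats(1)[OF assms(1)] assms(2)]
    tip_unitary_rel[OF max_column_unitary_mats(2)[OF assms(1)] assms(2)]
    tip_unitary_rel[OF max_column_unitary_mats(3)[OF assms(1)] assms(2)]
    tip_unitary_rel[OF max_column_unitary_mats(4)[OF assms(1)] assms(2)]
  by simp_all

lemma sum_reverse_index: "(\<Sum>s\<in>{1..n}. f (rr n s)) = (\<Sum>k\<in>{1..n}. f k)"
  by (rule sum.reindex_bij_witness[of _ "rr n" "rr n"]) (auto simp: rr_def)

lemma relpoly_eq_unitary_rel:
  assumes "i \<in> {1..n}"
  shows "(relpoly n v j i :: sym list \<Rightarrow> 'k::field) = unitary_rel n v j i"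
proof
  fix w
  have "mat_dag n v s (rr n i) = conj_sym (v i (rr n s))" for s
    using assms by (simp add: mat_dag_def rr_def)
  then show "(relpoly n v j i :: sym list \<Rightarrow> 'k) w = unitary_rel n v j i w"
    unfolding relpoly_def unitary_rel_apply
    using sum_reverse_index[where f = "\<lambda>k. if w = [v j k, conj_sym (v i k)] then (1::'k) else 0"]
    by simp
qed

lemma unitary_rel_reverse_index:
  assumes "j \<in> {1..n}" "i \<in> {1..n}"
  shows "unitary_rel n (\<lambda>j i. v (rr n j) (rr n i)) j i = unitary_rel n v (rr n j) (rr n i)"
proof -
  have "rr n j = rr n i \<longleftrightarrow> j = i"
    using assms by (auto simp: rr_def)
  then show ?thesis
    unfolding unitary_rel_def
    using sum_reverse_index[where f = "\<lambda>k. monom [v (rr n j) k, conj_sym (v (rr n i) k)]"] by simp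
qed

lemma relpoly_Mset:
  assumes "j \<in> {1..n}" "i \<in> {1..n}"
  shows "relpoly n umat j i = unitary_rel n umat j i"
    "relpoly n (mat_t umat) j i = unitary_rel n (mat_t umat) j i"
    "relpoly n (mat_star n umat) j i = unitary_rel n (conj_transp (mat_t umat)) (rr n j) (rr n i)"
    "relpoly n (mat_dag n umat) j i = unitary_rel n (conj_transp umat) (rr n j) (rr n i)"
proof -
  have "mat_star n umat = (\<lambda>j i. conj_transp (mat_t umat) (rr n j) (rr n i))"
    "mat_dag n umat = (\<lambda>j i. conj_transp umat (rr n j) (rr n i))"
    by (simp_all add: mat_star_def mat_dag_def fun_eq_iff)
  then show "relpoly n (mat_star n umat) j i = unitary_rel n (conj_transp (mat_t umat)) (rr n j) (rr n i)"
    "relpoly n (mat_dag n umat) j i = unitary_rel n (conj_transp umat) (rr n j) (rr n i)"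
    by (simp_all only: relpoly_eq_unitary_rel[OF assms(2)] unitary_rel_reverse_index[OF assms])
qed (use assms in \<open>simp_all add: relpoly_eq_unitary_rel\<close>)

lemma Rset_eq:
  "(Rset n :: (sym list \<Rightarrow> 'k::field) set) =
    {unitary_rel n v j i | v j i. v \<in> unitary_mats \<and> j \<in> {1..n} \<and> i \<in> {1..n}}"
  (is "_ = ?R")
proof
  have rr: "rr n j \<in> {1..n}" "rr n (rr n j) = j" if "j \<in> {1..n}" for j
    using that by (auto simp: rr_def)
  show "Rset n \<subseteq> ?R"
  proof
    fix g :: "sym list \<Rightarrow> 'k"
    assume "g \<in> Rset n"
    then obtain v j i where "v \<in> Mset n" and j: "j \<in> {1..n}" and i: "i \<in> {1..n}"
      and "g = relpoly n v j i"
      unfolding Rset_def by blast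
    then show "g \<in> ?R"
      unfolding Mset_def unitary_mats_def using rr[OF j] rr[OF i]
      by (elim insertE emptyE) (force simp: relpoly_Mset)+
  qed
  have Rset_I: "relpoly n v j i \<in> Rset n" if "v \<in> Mset n" "j \<in> {1..n}" "i \<in> {1..n}" for v j i
    unfolding Rset_def using that by blast
  show "?R \<subseteq> Rset n"
  proof
    fix g :: "sym list \<Rightarrow> 'k"
    assume "g \<in> ?R"
    then obtain v j i where "v \<in> unitary_mats" and j: "j \<in> {1..n}" and i: "i \<in> {1..n}"
      and "g = unitary_rel n v j i"
      by blast
    then show "g \<in> Rset n"
      unfolding unitary_mats_def
      using rr[OF j] rr[OF i] Rset_I[of umat j i] Rset_I[of "mat_t umat" j i]
        Rset_I[of "mat_dag n umat" "rr n j" "rr n i"] Rset_I[of "mat_star n umat" "rr n j" "rr n i"]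
      by (elim insertE emptyE) (simp_all add: Mset_def relpoly_Mset rr)
  qed
qed

lemma conj_sym_Xset: "a \<in> Xset n \<Longrightarrow> conj_sym a \<in> Xset n"
  by (auto simp: Xset_def)

lemma Rset_elemE:
  assumes "g \<in> Rset n" "1 \<le> n"
  obtains v j i m where "v \<in> unitary_mats" "j \<in> {1..n}" "i \<in> {1..n}" "max_column n v m"
    "g = unitary_rel n v j i"
  using assms unitary_mats_max_column unfolding Rset_eq by blast

lemma monic_relations_Rset:
  assumes "1 \<le> n"
  shows "monic_relations n (Rset n :: (sym list \<Rightarrow> 'k::field) set)"
proof
  fix g :: "sym list \<Rightarrow> 'k"
  assume "g \<in> Rset n"
  from this assms obtain v j i m where v: "v \<in> unitary_mats" and j: "j \<in> {1..n}" and i: "i \<in> {1..n}"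
    and max: "max_column n v m" and g: "g = unitary_rel n v j i"
    by (rule Rset_elemE)
  have supp: "{w. g w \<noteq> 0} \<subseteq> insert [] ((\<lambda>k. [v j k, conj_sym (v i k)]) ` {1..n})"
    using unitary_rel_support g by fastforce
  moreover have "insert [] ((\<lambda>k. [v j k, conj_sym (v i k)]) ` {1..n}) \<subseteq> lists (Xset n)"
    using unitary_mats_Xset[OF v] conj_sym_Xset j i by auto
  ultimately have "w \<in> lists (Xset n)" if "g w \<noteq> 0" for w
    using that by blast
  with finite_subset[OF supp] show "poly_on n g"
    by (auto simp: poly_on_def)
  show "g (tip g) = 1"
    using g by (simp add: tip_unitary_rel[OF max j] coeff_tip_unitary_rel[OF max j])
  show "g u \<noteq> 0 \<Longrightarrow> word_le u (tip g)" for u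
    using g by (simp add: tip_unitary_rel[OF max j] support_le_tip_unitary_rel[OF max j])
qed

lemma length_tip_Rset: "1 \<le> n \<Longrightarrow> g \<in> Rset n \<Longrightarrow> length (tip g) = 2"
  by (erule Rset_elemE) (simp_all add: tip_unitary_rel)

lemma Rset_unitary_rels:
  assumes "v \<in> unitary_mats" "k \<in> {1..n}" "l \<in> {1..n}"
  shows "unitary_rel n v k l \<in> Rset n" "unitary_rel n (conj_transp v) k l \<in> Rset n"
    "unitary_rel n (mat_t v) k l \<in> Rset n"
  using assms conj_transp_unitary_mats mat_t_unitary_mats unfolding Rset_eq by blast+

lemma Rset_inclusion_resolvable:
  fixes g1 g2 :: "sym list \<Rightarrow> 'k::field"
  assumes n: "1 \<le> n" and g: "g1 \<in> Rset n" "g2 \<in> Rset n" and tip: "tip g1 = tip g2"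
  shows "g1 - g2 \<in> span_below n (Rset n) (tip g1)"
proof -
  have trace: "unitary_rel n v m m - unitary_rel n (mat_t v) m m
      \<in> (span_below n (Rset n) [v m m, conj_sym (v m m)] :: (sym list \<Rightarrow> 'k) set)"
    if "v \<in> unitary_mats" "max_column n v m" "max_column n (mat_t v) m" for v m
    using that by (intro unitary_rel_inclusion_resolvable) (auto intro: Rset_unitary_rels)
  have "mat_t (conj_transp (mat_t umat)) = conj_transp umat"
    by (simp add: fun_eq_iff)
  then have traces:
    "unitary_rel n umat n n - unitary_rel n (mat_t umat) n n
      \<in> (span_below n (Rset n) [U n n, Us n n] :: (sym list \<Rightarrow> 'k) set)"
    "unitary_rel n (conj_transp (mat_t umat)) 1 1 - unitary_rel n (conj_transp umat) 1 1
      \<in> (span_below n (Rset n) [Us 1 1, U 1 1] :: (sym list \<Rightarrow> 'k) set)"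
    using trace[of umat n] trace[of "conj_transp (mat_t umat)" 1] max_column_unitary_mats[OF n]
    by (simp_all add: unitary_mats_def)
  txt \<open>Distinct relations share a tip only at [u_nn, u*_nn] (from u and u^t) and at
    [u*_11, u_11] (from the two conjugate families).\<close>
  from g tip show ?thesis
    using n traces rel_span_uminus[OF traces(1)] rel_span_uminus[OF traces(2)]
    by (auto elim!: Rset_elemE simp: unitary_mats_def tip_unitary_rel_unitary_mats rel_span.zero)
qed

lemma Rset_overlap_resolvable:
  fixes g1 g2 :: "sym list \<Rightarrow> 'k::field"
  assumes n: "2 \<le> n" and g: "g1 \<in> Rset n" "g2 \<in> Rset n"
    and tips: "tip g1 = [a, b]" "tip g2 = [b, c]"
  shows "sandwich [] g1 [c] - sandwich [a] g2 [] \<in> span_below n (Rset n) [a, b, c]"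
proof -
  have overlap: "sandwich [] (unitary_rel n v j m2) [v m2 l]
      - sandwich [v j m1] (unitary_rel n (conj_transp v) m1 l) []
      \<in> (span_below n (Rset n) [v j m1, conj_sym (v m2 m1), v m2 l] :: (sym list \<Rightarrow> 'k) set)"
    if "v \<in> unitary_mats" "max_column n v m1" "max_column n (conj_transp v) m2"
      "j \<in> {1..n}" "l \<in> {1..n}" for v m1 m2 j l
    using that by (intro unitary_rel_overlap_resolvable) (auto intro: Rset_unitary_rels unitary_mats_Xset)
  have "1 \<le> n" using n by simp
  note max = max_column_unitary_mats[OF this]
  have overlaps:
    "\<And>j l. j \<in> {1..n} \<Longrightarrow> l \<in> {1..n} \<Longrightarrow>
      sandwich [] (unitary_rel n umat j 1) [U 1 l]
      - sandwich [U j n] (unitary_rel n (conj_transp umat) n l) []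
      \<in> (span_below n (Rset n) [U j n, Us 1 n, U 1 l] :: (sym list \<Rightarrow> 'k) set)"
    "\<And>j l. j \<in> {1..n} \<Longrightarrow> l \<in> {1..n} \<Longrightarrow>
      sandwich [] (unitary_rel n (mat_t umat) j 1) [U l 1]
      - sandwich [U n j] (unitary_rel n (conj_transp (mat_t umat)) n l) []
      \<in> (span_below n (Rset n) [U n j, Us n 1, U l 1] :: (sym list \<Rightarrow> 'k) set)"
    "\<And>j l. j \<in> {1..n} \<Longrightarrow> l \<in> {1..n} \<Longrightarrow>
      sandwich [] (unitary_rel n (conj_transp (mat_t umat)) j n) [Us n l]
      - sandwich [Us j 1] (unitary_rel n (mat_t umat) 1 l) []
      \<in> (span_below n (Rset n) [Us j 1, U n 1, Us n l] :: (sym list \<Rightarrow> 'k) set)"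
    "\<And>j l. j \<in> {1..n} \<Longrightarrow> l \<in> {1..n} \<Longrightarrow>
      sandwich [] (unitary_rel n (conj_transp umat) j n) [Us l n]
      - sandwich [Us 1 j] (unitary_rel n umat 1 l) []
      \<in> (span_below n (Rset n) [Us 1 j, U 1 n, Us l n] :: (sym list \<Rightarrow> 'k) set)"
    using overlap[of umat n 1] overlap[of "mat_t umat" n 1]
      overlap[of "conj_transp (mat_t umat)" 1 n] overlap[of "conj_transp umat" 1 n]
    by (simp_all add: unitary_mats_def max[simplified])
  txt \<open>Of the sixteen pairs of families only these four overlap; the others clash in a letter,
    using n \<noteq> 1.\<close>
  from g tips n show ?thesis
    by (auto elim!: Rset_elemE simp: unitary_mats_def tip_unitary_rel_unitary_mats)
      (auto intro!: overlaps[simplified])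
qed

lemma resolvable_relations_Rset:
  assumes "2 \<le> n"
  shows "resolvable_relations n (Rset n :: (sym list \<Rightarrow> 'k::field) set)"
proof -
  have "1 \<le> n" using assms by simp
  then show ?thesis
    using monic_relations.resolvable_relations_if_quadratic[OF monic_relations_Rset]
      length_tip_Rset Rset_inclusion_resolvable Rset_overlap_resolvable[OF assms]
    by blast
qed

theorem proposition3p7:
  fixes n :: nat
  assumes "n \<ge> 2"
  shows "Tip (ideal_gen n (Rset n :: (sym list \<Rightarrow> 'k::field) set))
           = mon_ideal n (tip ` (Rset n :: (sym list \<Rightarrow> 'k) set))"
  using assms by (rule resolvable_relations.Tip_ideal_gen[OF resolvable_relations_Rset])

end
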